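(* For every $n\ge 3$, $\rho_T(C_n)\le 3$, where $C_n$ is the cycle on $n$ vertices.
   Context: Graphs are finite and simple. For $u,v\in(\mathbb{R}\cup\{\infty\})^k$ the min-plus tropical dot product is $u\odot v=\min_i(u_i+v_i)$. A min-plus $k$-tropical dot product representation of $G=(V,E)$ is a map $f:V\to(\mathbb{R}\cup\{\infty\})^k$ with a threshold $t>0$ such that for all distinct $x,y\in V$: $xy\in E$ iff $f(x)\odot f(y)\ge t$. $\rho_T(G)$ is the least $k\ge 1$ for which such a representation exists. *)

theory Defs
  imports "HOL-Library.Extended_Real"
begin

text \<open>Vectors in (R \<union> {infinity})^k are modelled as functions nat => ereal whose
  coordinates i < k are never minus infinity (coordinates >= k are irrelevant).\<close>

definition trop_vec :: "nat \<Rightarrow> (nat \<Rightarrow> ereal) \<Rightarrow> bool" where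
  "trop_vec k u \<longleftrightarrow> (\<forall>i<k. u i \<noteq> -\<infinity>)"

definition trop_dot :: "nat \<Rightarrow> (nat \<Rightarrow> ereal) \<Rightarrow> (nat \<Rightarrow> ereal) \<Rightarrow> ereal" where
  "trop_dot k u v = Min ((\<lambda>i. u i + v i) ` {..<k})"

definition trop_rep :: "'a set \<Rightarrow> ('a \<Rightarrow> 'a \<Rightarrow> bool) \<Rightarrow> nat \<Rightarrow> bool" where
  "trop_rep V E k \<longleftrightarrow> (\<exists>(f :: 'a \<Rightarrow> nat \<Rightarrow> ereal) (t :: real). t > 0 \<and>
     (\<forall>x\<in>V. trop_vec k (f x)) \<and>
     (\<forall>x\<in>V. \<forall>y\<in>V. x \<noteq> y \<longrightarrow> (E x y \<longleftrightarrow> trop_dot k (f x) (f y) \<ge> ereal t)))"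

definition rho_T :: "'a set \<Rightarrow> ('a \<Rightarrow> 'a \<Rightarrow> bool) \<Rightarrow> nat" where
  "rho_T V E = (LEAST k. 1 \<le> k \<and> trop_rep V E k)"

definition cycle_edge :: "nat \<Rightarrow> nat \<Rightarrow> nat \<Rightarrow> bool" where
  "cycle_edge n i j \<longleftrightarrow> i < n \<and> j < n \<and> (j = (i + 1) mod n \<or> i = (j + 1) mod n)"

end

theory Submission
  imports Defs
begin

text \<open>Delete vertex 0 from the cycle to obtain the path 1, \<dots>, n - 1. On the first two coordinates
  put the alternating vectors (1 + i, 1 - i) for even i and (1 - i, 1 + i) for odd i: for i, j of the
  same parity one of the two sums is 2 - i - j < 1, and otherwise the minimum is 2 - |i - j|, so
  the threshold 1 is reached exactly for neighbours on the path. Vertex 0 gets (\<infinity>, \<infinity>, 0), and the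
  third coordinate of a path vertex is 1 at the two ends of the path and 1/2 elsewhere, which makes
  0 adjacent to exactly the two ends without affecting the path vertices among themselves.\<close>

definition path_fst :: "nat \<Rightarrow> real" where
  "path_fst i = (if even i then 1 + real i else 1 - real i)"

definition path_snd :: "nat \<Rightarrow> real" where
  "path_snd i = (if even i then 1 - real i else 1 + real i)"

definition endpoint_weight :: "nat \<Rightarrow> nat \<Rightarrow> real" where
  "endpoint_weight n i = (if i = 1 \<or> i = n - 1 then 1 else 1/2)"

definition cycle_vec :: "nat \<Rightarrow> nat \<Rightarrow> nat \<Rightarrow> ereal" where
  "cycle_vec n i k =
     (if i = 0 then (if k = 2 then 0 else \<infinity>)
      else ereal (if k = 0 then path_fst i else if k = 1 then path_snd i else endpoint_weight n i))"

lemma trop_dot_3: "trop_dot 3 u v = min (u 0 + v 0) (min (u 1 + v 1) (u 2 + v 2))"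
proof -
  have "{..<(3::nat)} = {0, 1, 2}" by auto
  then show ?thesis unfolding trop_dot_def by (simp add: min.assoc)
qed

lemma rho_T_le:
  assumes "1 \<le> k" "trop_rep V E k"
  shows "rho_T V E \<le> k"
  unfolding rho_T_def by (rule Least_le) (use assms in simp)

lemma cycle_edge_iff:
  assumes "x < n" "y < n"
  shows "cycle_edge n x y \<longleftrightarrow>
    y = x + 1 \<or> x = y + 1 \<or> (x = 0 \<and> y = n - 1) \<or> (y = 0 \<and> x = n - 1)"
proof -
  have "(z + 1) mod n = (if z = n - 1 then 0 else z + 1)" if "z < n" for z
    using that by (auto simp: mod_if)
  then show ?thesis using assms by (auto simp: cycle_edge_def)
qed

lemma path_coords_adjacent_iff:
  assumes "i \<noteq> j" "i + j \<ge> 3"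
  shows "min (path_fst i + path_fst j) (path_snd i + path_snd j) \<ge> 1 \<longleftrightarrow> j = i + 1 \<or> i = j + 1"
proof (cases "even i = even j")
  case True
  then have "j \<noteq> i + 1 \<and> i \<noteq> j + 1" by auto
  moreover have "real i + real j \<ge> 3" using assms(2) by linarith
  ultimately show ?thesis using True by (auto simp: path_fst_def path_snd_def)
next
  case False
  then show ?thesis using assms(1) by (auto simp: path_fst_def path_snd_def min_def)
qed

lemma cycle_vec_dot_ge_iff:
  assumes "n \<ge> 3" "x < n" "y < n" "x \<noteq> y"
  shows "cycle_edge n x y \<longleftrightarrow> trop_dot 3 (cycle_vec n x) (cycle_vec n y) \<ge> ereal 1"
proof -
  consider "x = 0" | "y = 0" | "x \<noteq> 0" "y \<noteq> 0" by blast
  then show ?thesis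
  proof cases
    case 1
    then have "trop_dot 3 (cycle_vec n x) (cycle_vec n y) = endpoint_weight n y"
      using assms by (simp add: trop_dot_3 cycle_vec_def)
    then show ?thesis using 1 assms by (auto simp: cycle_edge_iff endpoint_weight_def)
  next
    case 2
    then have "trop_dot 3 (cycle_vec n x) (cycle_vec n y) = endpoint_weight n x"
      using assms by (simp add: trop_dot_3 cycle_vec_def)
    then show ?thesis using 2 assms by (auto simp: cycle_edge_iff endpoint_weight_def)
  next
    case 3
    have "trop_dot 3 (cycle_vec n x) (cycle_vec n y) =
        min (min (path_fst x + path_fst y) (path_snd x + path_snd y))
            (endpoint_weight n x + endpoint_weight n y)"
      using 3 by (simp add: trop_dot_3 cycle_vec_def min.assoc)
    moreover have "endpoint_weight n x + endpoint_weight n y \<ge> 1"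
      by (simp add: endpoint_weight_def)
    moreover have "cycle_edge n x y \<longleftrightarrow> y = x + 1 \<or> x = y + 1"
      using 3 assms by (auto simp: cycle_edge_iff)
    moreover have "x + y \<ge> 3" using 3 assms(4) by auto
    ultimately show ?thesis using path_coords_adjacent_iff[of x y] assms(4) by auto
  qed
qed

lemma cycle_trop_rep_3:
  assumes "n \<ge> 3"
  shows "trop_rep {0..<n} (cycle_edge n) 3"
  unfolding trop_rep_def
proof (intro exI[of _ "cycle_vec n"] exI[of _ 1] conjI ballI impI)
  show "trop_vec 3 (cycle_vec n x)" for x
    by (simp add: trop_vec_def cycle_vec_def)
qed (use assms cycle_vec_dot_ge_iff in auto)

theorem mainTheorem18:
  fixes n :: nat
  assumes "n \<ge> 3"
  shows "(\<exists>k. 1 \<le> k \<and> trop_rep {0..<n} (cycle_edge n) k) \<and> rho_T {0..<n} (cycle_edge n) \<le> 3"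
proof -
  have "trop_rep {0..<n} (cycle_edge n) 3" using assms by (rule cycle_trop_rep_3)
  then show ?thesis using rho_T_le[of 3] by (auto intro!: exI[of _ 3])
qed

end
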